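(* Fix an epoch $\ell$ of the UCB-like policy described in the context and suppose that for every $S\subseteq\mathcal N$ and every $b\in(0,1)^N$, with $B(S\mid v)=\sum_{i\in S}b(i)\varphi(i,S\mid v)$, $$B(S\mid\hat v^\ell)-\sum_{i\in S}b(i)\varepsilon(n_i^{\ell-1})\le B(S\mid v^* )\le B(S\mid\hat v^\ell)+\sum_{i\in S}b(i)\varepsilon(n_i^{\ell-1}).$$ Then $OPT(\text{UCB-LP}(\hat v^\ell,n^{\ell-1},\omega))\ge(1-\omega)\,OPT(LP(v^* ))$.
   Context: $N$ products $\mathcal N=\{1,\dots,N\}$, $K$ resources $\mathcal K$; revenues $r(i)\in[0,1]$, consumptions $a(i,k)\in[0,1]$, $c(k)>0$. MNL probabilities: $\varphi(i,S\mid v)=v_i/(1+\sum_{j\in S}v_j)$ for $i\in S\subseteq\mathcal N$, $v\in\mathbb R_{>0}^N$. $v^*$ is the true preference vector. $LP(v)$: maximize $\sum_{S\subseteq\mathcal N}\sum_{i\in S}r(i)\varphi(i,S\mid v)y(S)$ subject to $\sum_S\sum_{i\in S}a(i,k)\varphi(i,S\mid v)y(S)\le c(k)$ for all $k$, $\sum_S y(S)=1$, $y\ge0$ (the sum over $S$ includes $S=\emptyset$); $OPT(\cdot)$ denotes an optimal value. In epoch $\ell$ of the policy, $\hat v^\ell\in\mathbb R_{>0}^N$ is the current MLE, $n_i^{\ell-1}\ge1$ is the number of past periods in which product $i$ was offered, $\varepsilon(n)=(\sqrt N+1)\Psi/\sqrt n$ for a constant $\Psi>0$, and $\omega\in[0,1]$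 is a tightening parameter. UCB-LP$(\hat v^\ell,n^{\ell-1},\omega)$: maximize $\sum_S\sum_{i\in S}r(i)\big(\varphi(i,S\mid\hat v^\ell)+\varepsilon(n_i^{\ell-1})\big)y(S)$ subject to $\sum_S\sum_{i\in S}a(i,k)\big(\varphi(i,S\mid\hat v^\ell)-\varepsilon(n_i^{\ell-1})\big)y(S)\le(1-\omega)c(k)$ for all $k$, $\sum_S y(S)=1$, $y\ge0$. *)

theory Defs
  imports Complex_Main
begin

text \<open>Products are 1..N, subsets S range over Pow {1..N}; an LP solution is
  y :: nat set \<Rightarrow> real, only its values on Pow {1..N} matter.\<close>

definition mnl :: "(nat \<Rightarrow> real) \<Rightarrow> nat \<Rightarrow> nat set \<Rightarrow> real" where
  "mnl v i S = v i / (1 + (\<Sum>j\<in>S. v j))"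

definition eps :: "nat \<Rightarrow> real \<Rightarrow> nat \<Rightarrow> real" where
  "eps N \<Psi> n = (sqrt (real N) + 1) * \<Psi> / sqrt (real n)"

definition LP_obj :: "nat \<Rightarrow> (nat \<Rightarrow> real) \<Rightarrow> (nat \<Rightarrow> real) \<Rightarrow> (nat set \<Rightarrow> real) \<Rightarrow> real" where
  "LP_obj N r v y = (\<Sum>S\<in>Pow {1..N}. \<Sum>i\<in>S. r i * mnl v i S * y S)"

definition LP_feas :: "nat \<Rightarrow> 'k set \<Rightarrow> (nat \<Rightarrow> 'k \<Rightarrow> real) \<Rightarrow> ('k \<Rightarrow> real)
    \<Rightarrow> (nat \<Rightarrow> real) \<Rightarrow> (nat set \<Rightarrow> real) \<Rightarrow> bool" where
  "LP_feas N K a c v y \<longleftrightarrow>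
     (\<forall>S\<in>Pow {1..N}. y S \<ge> 0) \<and> (\<Sum>S\<in>Pow {1..N}. y S) = 1 \<and>
     (\<forall>k\<in>K. (\<Sum>S\<in>Pow {1..N}. \<Sum>i\<in>S. a i k * mnl v i S * y S) \<le> c k)"

definition OPT_LP :: "nat \<Rightarrow> 'k set \<Rightarrow> (nat \<Rightarrow> real) \<Rightarrow> (nat \<Rightarrow> 'k \<Rightarrow> real) \<Rightarrow> ('k \<Rightarrow> real)
    \<Rightarrow> (nat \<Rightarrow> real) \<Rightarrow> real" where
  "OPT_LP N K r a c v = Sup (LP_obj N r v ` {y. LP_feas N K a c v y})"

definition UCB_obj :: "nat \<Rightarrow> real \<Rightarrow> (nat \<Rightarrow> real) \<Rightarrow> (nat \<Rightarrow> real) \<Rightarrow> (nat \<Rightarrow> nat)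
    \<Rightarrow> (nat set \<Rightarrow> real) \<Rightarrow> real" where
  "UCB_obj N \<Psi> r vh n y =
     (\<Sum>S\<in>Pow {1..N}. \<Sum>i\<in>S. r i * (mnl vh i S + eps N \<Psi> (n i)) * y S)"

definition UCB_feas :: "nat \<Rightarrow> real \<Rightarrow> 'k set \<Rightarrow> (nat \<Rightarrow> 'k \<Rightarrow> real) \<Rightarrow> ('k \<Rightarrow> real)
    \<Rightarrow> (nat \<Rightarrow> real) \<Rightarrow> (nat \<Rightarrow> nat) \<Rightarrow> real \<Rightarrow> (nat set \<Rightarrow> real) \<Rightarrow> bool" where
  "UCB_feas N \<Psi> K a c vh n \<omega> y \<longleftrightarrow>
     (\<forall>S\<in>Pow {1..N}. y S \<ge> 0) \<and> (\<Sum>S\<in>Pow {1..N}. y S) = 1 \<and>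
     (\<forall>k\<in>K. (\<Sum>S\<in>Pow {1..N}. \<Sum>i\<in>S. a i k * (mnl vh i S - eps N \<Psi> (n i)) * y S)
              \<le> (1 - \<omega>) * c k)"

definition OPT_UCB :: "nat \<Rightarrow> real \<Rightarrow> 'k set \<Rightarrow> (nat \<Rightarrow> real) \<Rightarrow> (nat \<Rightarrow> 'k \<Rightarrow> real) \<Rightarrow> ('k \<Rightarrow> real)
    \<Rightarrow> (nat \<Rightarrow> real) \<Rightarrow> (nat \<Rightarrow> nat) \<Rightarrow> real \<Rightarrow> real" where
  "OPT_UCB N \<Psi> K r a c vh n \<omega> =
     Sup (UCB_obj N \<Psi> r vh n ` {y. UCB_feas N \<Psi> K a c vh n \<omega> y})"

end

theory Submission
  imports Defs
begin

text \<open>Both confidence bounds are linear in the weights \<open>b\<close>, so they extend from the open cube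
  \<open>(0,1)\<^sup>N\<close> to the closed one and apply to \<open>b = r\<close> and \<open>b = a(\<cdot>,k)\<close>. For every feasible \<open>y\<close> of
  \<open>LP(v\<^sup>*)\<close>, the mixture \<open>y' = (1-\<omega>) y + \<omega> \<delta>\<^sub>\<emptyset>\<close> is then feasible for the UCB-LP: the empty
  assortment consumes nothing, and the lower confidence bound on consumption stays below the true
  consumption, which is at most \<open>c(k)\<close>. The upper confidence bound on revenue gives
  \<open>UCB(y') \<ge> (1-\<omega>) LP(y)\<close>; taking suprema proves the claim.\<close>

lemma sum_weighted_nonpos_on_closed_cube:
  fixes b d :: "'a \<Rightarrow> real"
  assumes b: "\<forall>i\<in>I. 0 \<le> b i \<and> b i \<le> 1"
    and open_cube: "\<And>b. \<forall>i\<in>I. 0 < b i \<and> b i < 1 \<Longrightarrow> (\<Sum>i\<in>S. b i * d i) \<le> 0"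
  shows "(\<Sum>i\<in>S. b i * d i) \<le> 0"
proof -
  let ?L = "\<lambda>t. (\<Sum>i\<in>S. ((1 - t) * b i + t / 2) * d i)"
  have "\<forall>\<^sub>F t in at_right (0::real). 0 < t \<and> t < 1"
    unfolding eventually_at_right_field by (intro exI[of _ 1]) auto
  then have "\<forall>\<^sub>F t in at_right (0::real). ?L t \<le> 0"
  proof (rule eventually_mono)
    fix t :: real
    assume t: "0 < t \<and> t < 1"
    have "0 < (1 - t) * b i + t / 2 \<and> (1 - t) * b i + t / 2 < 1" if "i \<in> I" for i
    proof -
      have "0 \<le> (1 - t) * b i" "(1 - t) * b i \<le> 1 - t"
        using t b \<open>i \<in> I\<close> by (simp_all add: mult_left_le)
      then show ?thesis using t by linarith
    qed
    then show "?L t \<le> 0" by (intro open_cube) blast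
  qed
  moreover have "(?L \<longlongrightarrow> ?L 0) (at_right 0)"
    by (intro tendsto_intros) simp
  ultimately have "?L 0 \<le> 0"
    by (intro tendsto_le[OF _ tendsto_const]) simp_all
  then show ?thesis by simp
qed

lemma confidence_bounds_on_closed_cube:
  fixes b p q e :: "'a \<Rightarrow> real"
  assumes b: "\<forall>i\<in>I. 0 \<le> b i \<and> b i \<le> 1"
    and open_cube: "\<And>b. \<forall>i\<in>I. 0 < b i \<and> b i < 1 \<Longrightarrow>
        (\<Sum>i\<in>S. b i * p i) - (\<Sum>i\<in>S. b i * e i) \<le> (\<Sum>i\<in>S. b i * q i)
        \<and> (\<Sum>i\<in>S. b i * q i) \<le> (\<Sum>i\<in>S. b i * p i) + (\<Sum>i\<in>S. b i * e i)"
  shows "(\<Sum>i\<in>S. b i * (p i - e i)) \<le> (\<Sum>i\<in>S. b i * q i)"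
    and "(\<Sum>i\<in>S. b i * q i) \<le> (\<Sum>i\<in>S. b i * (p i + e i))"
proof -
  have "(\<Sum>i\<in>S. b i * (p i - e i - q i)) \<le> 0"
    using b
  proof (rule sum_weighted_nonpos_on_closed_cube)
    fix b' :: "'a \<Rightarrow> real"
    assume "\<forall>i\<in>I. 0 < b' i \<and> b' i < 1"
    from open_cube[OF this] show "(\<Sum>i\<in>S. b' i * (p i - e i - q i)) \<le> 0"
      by (simp add: sum_subtractf right_diff_distrib)
  qed
  then show "(\<Sum>i\<in>S. b i * (p i - e i)) \<le> (\<Sum>i\<in>S. b i * q i)"
    by (simp add: sum_subtractf right_diff_distrib)
  have "(\<Sum>i\<in>S. b i * (q i - p i - e i)) \<le> 0"
    using b
  proof (rule sum_weighted_nonpos_on_closed_cube)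
    fix b' :: "'a \<Rightarrow> real"
    assume "\<forall>i\<in>I. 0 < b' i \<and> b' i < 1"
    from open_cube[OF this] show "(\<Sum>i\<in>S. b' i * (q i - p i - e i)) \<le> 0"
      by (simp add: sum_subtractf right_diff_distrib)
  qed
  then show "(\<Sum>i\<in>S. b i * q i) \<le> (\<Sum>i\<in>S. b i * (p i + e i))"
    by (simp add: sum_subtractf right_diff_distrib distrib_left sum.distrib)
qed

lemma sum_sum_mult_mono:
  fixes f g :: "'a \<Rightarrow> 'a set \<Rightarrow> real"
  assumes "\<forall>S\<in>A. 0 \<le> y S" and "\<And>S. S \<in> A \<Longrightarrow> (\<Sum>i\<in>S. f i S) \<le> (\<Sum>i\<in>S. g i S)"
  shows "(\<Sum>S\<in>A. \<Sum>i\<in>S. f i S * y S) \<le> (\<Sum>S\<in>A. \<Sum>i\<in>S. g i S * y S)"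
  using assms by (auto intro!: sum_mono simp: sum_distrib_right[symmetric] mult_right_mono)

definition mix_empty :: "real \<Rightarrow> ('a set \<Rightarrow> real) \<Rightarrow> 'a set \<Rightarrow> real" where
  "mix_empty \<omega> y S = (1 - \<omega>) * y S + (if S = {} then \<omega> else 0)"

lemma sum_sum_mix_empty:
  fixes f :: "'a \<Rightarrow> 'a set \<Rightarrow> real"
  shows "(\<Sum>S\<in>A. \<Sum>i\<in>S. f i S * mix_empty \<omega> y S) = (1 - \<omega>) * (\<Sum>S\<in>A. \<Sum>i\<in>S. f i S * y S)"
proof -
  have "(\<Sum>S\<in>A. \<Sum>i\<in>S. f i S * mix_empty \<omega> y S) = (\<Sum>S\<in>A. \<Sum>i\<in>S. (1 - \<omega>) * (f i S * y S))"
    by (intro sum.cong refl) (auto simp: mix_empty_def)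
  then show ?thesis by (simp add: sum_distrib_left)
qed

lemma sum_mix_empty:
  assumes "finite A" and "{} \<in> A"
  shows "sum (mix_empty \<omega> y) A = (1 - \<omega>) * sum y A + \<omega>"
  using assms by (simp add: mix_empty_def sum.distrib sum_distrib_left)

lemma UCB_feas_mix_empty:
  assumes y: "LP_feas N K a c v y" and "0 \<le> \<omega>" "\<omega> \<le> 1"
    and lower_bound: "\<And>S k. S \<subseteq> {1..N} \<Longrightarrow> k \<in> K \<Longrightarrow>
      (\<Sum>i\<in>S. a i k * (mnl vh i S - eps N \<Psi> (n i))) \<le> (\<Sum>i\<in>S. a i k * mnl v i S)"
  shows "UCB_feas N \<Psi> K a c vh n \<omega> (mix_empty \<omega> y)"
proof -
  have y_nonneg: "\<forall>S\<in>Pow {1..N}. 0 \<le> y S" and y_sum: "sum y (Pow {1..N}) = 1"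
    and y_cap: "\<forall>k\<in>K. (\<Sum>S\<in>Pow {1..N}. \<Sum>i\<in>S. a i k * mnl v i S * y S) \<le> c k"
    using y unfolding LP_feas_def by auto
  have "(\<Sum>S\<in>Pow {1..N}. \<Sum>i\<in>S. a i k * (mnl vh i S - eps N \<Psi> (n i)) * y S) \<le> c k"
    if "k \<in> K" for k
    using sum_sum_mult_mono[OF y_nonneg lower_bound] y_cap that by fastforce
  moreover have "sum (mix_empty \<omega> y) (Pow {1..N}) = 1"
    using y_sum by (simp add: sum_mix_empty)
  moreover have "0 \<le> mix_empty \<omega> y S" if "S \<in> Pow {1..N}" for S
    using y_nonneg that \<open>0 \<le> \<omega>\<close> \<open>\<omega> \<le> 1\<close> by (simp add: mix_empty_def)
  ultimately show ?thesis
    using \<open>\<omega> \<le> 1\<close> unfolding UCB_feas_def sum_sum_mix_empty by (simp add: mult_left_mono)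
qed

lemma UCB_obj_mix_empty:
  "UCB_obj N \<Psi> r vh n (mix_empty \<omega> y) = (1 - \<omega>) * UCB_obj N \<Psi> r vh n y"
  unfolding UCB_obj_def by (rule sum_sum_mix_empty)

lemma LP_obj_le_UCB_obj:
  assumes "\<forall>S\<in>Pow {1..N}. 0 \<le> y S"
    and "\<And>S. S \<subseteq> {1..N} \<Longrightarrow>
      (\<Sum>i\<in>S. r i * mnl v i S) \<le> (\<Sum>i\<in>S. r i * (mnl vh i S + eps N \<Psi> (n i)))"
  shows "LP_obj N r v y \<le> UCB_obj N \<Psi> r vh n y"
  unfolding LP_obj_def UCB_obj_def using assms by (intro sum_sum_mult_mono) auto

lemma LP_feas_empty_assortment:
  assumes "\<forall>k\<in>K. 0 \<le> c k"
  shows "LP_feas N K a c v (\<lambda>S. if S = {} then 1 else 0)"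
proof -
  have "(\<Sum>S\<in>Pow {1..N}. \<Sum>i\<in>S. f i S * (if S = {} then 1 else 0)) = 0" for f :: "nat \<Rightarrow> nat set \<Rightarrow> real"
    by (rule sum.neutral) auto
  then show ?thesis
    using assms unfolding LP_feas_def by (auto simp: sum.delta)
qed

lemma bdd_above_linear_on_simplex:
  fixes g :: "'a \<Rightarrow> real"
  assumes "finite A"
  shows "bdd_above ((\<lambda>y. \<Sum>S\<in>A. g S * y S) ` {y :: 'a \<Rightarrow> real. (\<forall>S\<in>A. 0 \<le> y S) \<and> sum y A = 1})"
proof (rule bdd_aboveI2)
  fix y
  assume "y \<in> {y :: 'a \<Rightarrow> real. (\<forall>S\<in>A. 0 \<le> y S) \<and> sum y A = 1}"
  then have y: "\<forall>S\<in>A. 0 \<le> y S \<and> y S \<le> 1"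
    using member_le_sum[of _ A y] assms by auto
  show "(\<Sum>S\<in>A. g S * y S) \<le> (\<Sum>S\<in>A. \<bar>g S\<bar>)"
  proof (rule sum_mono)
    fix S
    assume "S \<in> A"
    then have "g S * y S \<le> \<bar>g S\<bar> * y S" "\<bar>g S\<bar> * y S \<le> \<bar>g S\<bar>"
      using y by (simp_all add: mult_right_mono mult_left_le)
    then show "g S * y S \<le> \<bar>g S\<bar>" by linarith
  qed
qed

lemma bdd_above_UCB_obj:
  "bdd_above (UCB_obj N \<Psi> r vh n ` {y. UCB_feas N \<Psi> K a c vh n \<omega> y})"
proof (rule bdd_above_mono[OF bdd_above_linear_on_simplex[of "Pow {1..N}"]])
  show "UCB_obj N \<Psi> r vh n ` {y. UCB_feas N \<Psi> K a c vh n \<omega> y}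
    \<subseteq> (\<lambda>y. \<Sum>S\<in>Pow {1..N}. (\<Sum>i\<in>S. r i * (mnl vh i S + eps N \<Psi> (n i))) * y S)
        ` {y. (\<forall>S\<in>Pow {1..N}. 0 \<le> y S) \<and> sum y (Pow {1..N}) = 1}"
    unfolding UCB_obj_def UCB_feas_def by (auto simp: sum_distrib_right)
qed simp

lemma mult_cSup_le:
  fixes X :: "real set"
  assumes "X \<noteq> {}" and "0 \<le> t" and "\<And>x. x \<in> X \<Longrightarrow> t * x \<le> M"
  shows "t * Sup X \<le> M"
proof (cases "t = 0")
  case True
  with assms show ?thesis by fastforce
next
  case False
  with \<open>0 \<le> t\<close> have "0 < t" by simp
  then have "Sup X \<le> M / t"
    using assms by (intro cSup_least) (auto simp: le_divide_eq mult.commute)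
  with \<open>0 < t\<close> show ?thesis by (simp add: le_divide_eq mult.commute)
qed

theorem lemma4:
  fixes N :: nat and K :: "'k set" and r :: "nat \<Rightarrow> real" and a :: "nat \<Rightarrow> 'k \<Rightarrow> real"
    and c :: "'k \<Rightarrow> real" and vstar vh :: "nat \<Rightarrow> real" and n :: "nat \<Rightarrow> nat"
    and \<Psi> \<omega> :: real
  assumes "finite K"
    and "\<And>i. i \<in> {1..N} \<Longrightarrow> 0 \<le> r i \<and> r i \<le> 1"
    and "\<And>i k. i \<in> {1..N} \<Longrightarrow> k \<in> K \<Longrightarrow> 0 \<le> a i k \<and> a i k \<le> 1"
    and "\<And>k. k \<in> K \<Longrightarrow> c k > 0"
    and "\<And>i. i \<in> {1..N} \<Longrightarrow> vstar i > 0"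
    and "\<And>i. i \<in> {1..N} \<Longrightarrow> vh i > 0"
    and "\<And>i. i \<in> {1..N} \<Longrightarrow> n i \<ge> 1"
    and "\<Psi> > 0"
    and "0 \<le> \<omega>" and "\<omega> \<le> 1"
    and conc: "\<And>S b. S \<subseteq> {1..N} \<Longrightarrow> (\<forall>i\<in>{1..N}. 0 < b i \<and> b i < 1) \<Longrightarrow>
        (\<Sum>i\<in>S. b i * mnl vh i S) - (\<Sum>i\<in>S. b i * eps N \<Psi> (n i)) \<le> (\<Sum>i\<in>S. b i * mnl vstar i S)
        \<and> (\<Sum>i\<in>S. b i * mnl vstar i S) \<le> (\<Sum>i\<in>S. b i * mnl vh i S) + (\<Sum>i\<in>S. b i * eps N \<Psi> (n i))"
  shows "OPT_UCB N \<Psi> K r a c vh n \<omega> \<ge> (1 - \<omega>) * OPT_LP N K r a c vstar"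
proof -
  have bounds: "(\<Sum>i\<in>S. b i * (mnl vh i S - eps N \<Psi> (n i))) \<le> (\<Sum>i\<in>S. b i * mnl vstar i S)"
    "(\<Sum>i\<in>S. b i * mnl vstar i S) \<le> (\<Sum>i\<in>S. b i * (mnl vh i S + eps N \<Psi> (n i)))"
    if "S \<subseteq> {1..N}" and "\<forall>i\<in>{1..N}. 0 \<le> b i \<and> b i \<le> 1" for S b
    using confidence_bounds_on_closed_cube[OF that(2) conc[OF that(1)]] by simp_all
  have "(1 - \<omega>) * LP_obj N r vstar y \<le> OPT_UCB N \<Psi> K r a c vh n \<omega>"
    if y: "LP_feas N K a c vstar y" for y
  proof -
    have "LP_obj N r vstar y \<le> UCB_obj N \<Psi> r vh n y"
      using y assms(2) unfolding LP_feas_def by (intro LP_obj_le_UCB_obj bounds(2)) auto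
    then have "(1 - \<omega>) * LP_obj N r vstar y \<le> UCB_obj N \<Psi> r vh n (mix_empty \<omega> y)"
      using \<open>\<omega> \<le> 1\<close> by (simp add: UCB_obj_mix_empty mult_left_mono)
    also have "\<dots> \<le> OPT_UCB N \<Psi> K r a c vh n \<omega>"
      using y assms(3,9,10) unfolding OPT_UCB_def
      by (intro cSup_upper bdd_above_UCB_obj) (auto intro!: UCB_feas_mix_empty bounds(1))
    finally show ?thesis .
  qed
  moreover have "LP_feas N K a c vstar (\<lambda>S. if S = {} then 1 else 0)"
    using assms(4) by (intro LP_feas_empty_assortment) (simp add: less_imp_le)
  ultimately show ?thesis
    unfolding OPT_LP_def using \<open>\<omega> \<le> 1\<close> by (intro mult_cSup_le) auto
qed

end
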